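(* Let $f\in\mathcal{F}_k$. Then the set $\mathcal{V}=\{-1,0,1\}^k$ is representative for the Lovász hinge $L^f$, i.e., for every $p\in\Delta_\mathcal{Y}$, $\arg\min_{u\in\mathbb{R}^k}\sum_{y\in\mathcal{Y}}p_yL^f(u,y)\cap\mathcal{V}\neq\emptyset$.
   Context: $[k]=\{1,\dots,k\}$, $\mathcal{Y}=\{-1,1\}^k$, $\Delta_\mathcal{Y}$ the probability distributions on $\mathcal{Y}$. $u\odot u'$ entrywise product, $\mathbbm{1}$ all-ones vector, $(x)_+$ entrywise positive part. $\mathcal{F}_k$: set functions $f:2^{[k]}\to\mathbb{R}$ that are submodular ($f(S)+f(T)\ge f(S\cup T)+f(S\cap T)$), increasing ($f(S\cup T)\ge f(S)$ for disjoint $S,T$) and normalized ($f(\emptyset)=0$). Lovász extension $F(x)=\max_\pi\sum_{i=1}^k x_{\pi_i}(f(\{\pi_1,\dots,\pi_i\})-f(\{\pi_1,\dots,\pi_{i-1}\}))$ for $x\in\mathbb{R}^k_+$ (max over permutations of $[k]$); Lovász hinge $L^f(u,y)=F((\mathbbm{1}-u\odot y)_+)$. *)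

theory Defs
  imports "HOL-Analysis.Analysis" "HOL-Combinatorics.Permutations"
begin

text \<open>Ground set [k] = {1..k}; vectors in R^k are functions nat => real (only
  coordinates in {1..k} matter). Set functions are f :: nat set => real.\<close>

definition submodular_on :: "nat \<Rightarrow> (nat set \<Rightarrow> real) \<Rightarrow> bool" where
  "submodular_on k f \<longleftrightarrow> (\<forall>S T. S \<subseteq> {1..k} \<longrightarrow> T \<subseteq> {1..k} \<longrightarrow>
      f S + f T \<ge> f (S \<union> T) + f (S \<inter> T))"

definition increasing_on :: "nat \<Rightarrow> (nat set \<Rightarrow> real) \<Rightarrow> bool" where
  "increasing_on k f \<longleftrightarrow> (\<forall>S T. S \<subseteq> {1..k} \<longrightarrow> T \<subseteq> {1..k} \<longrightarrow> S \<inter> T = {} \<longrightarrow>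
      f (S \<union> T) \<ge> f S)"

definition normalized :: "(nat set \<Rightarrow> real) \<Rightarrow> bool" where
  "normalized f \<longleftrightarrow> f {} = 0"

definition F_class :: "nat \<Rightarrow> (nat set \<Rightarrow> real) set" where
  "F_class k = {f. submodular_on k f \<and> increasing_on k f \<and> normalized f}"

definition lovasz_ext :: "nat \<Rightarrow> (nat set \<Rightarrow> real) \<Rightarrow> (nat \<Rightarrow> real) \<Rightarrow> real" where
  "lovasz_ext k f x = Max ((\<lambda>\<pi>. \<Sum>i=1..k. x (\<pi> i) * (f (\<pi> ` {1..i}) - f (\<pi> ` {1..<i})))
      ` {\<pi>. \<pi> permutes {1..k}})"

definition lovasz_hinge :: "nat \<Rightarrow> (nat set \<Rightarrow> real) \<Rightarrow> (nat \<Rightarrow> real) \<Rightarrow> (nat \<Rightarrow> real) \<Rightarrow> real" where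
  "lovasz_hinge k f u y = lovasz_ext k f (\<lambda>i. max 0 (1 - u i * y i))"

definition labels :: "nat \<Rightarrow> (nat \<Rightarrow> real) set" where
  "labels k = PiE {1..k} (\<lambda>_. {-1, 1})"

definition simplex_labels :: "nat \<Rightarrow> ((nat \<Rightarrow> real) \<Rightarrow> real) set" where
  "simplex_labels k = {p. (\<forall>y\<in>labels k. p y \<ge> 0) \<and> (\<Sum>y\<in>labels k. p y) = 1}"

definition exp_loss :: "nat \<Rightarrow> (nat set \<Rightarrow> real) \<Rightarrow> ((nat \<Rightarrow> real) \<Rightarrow> real) \<Rightarrow> (nat \<Rightarrow> real) \<Rightarrow> real" where
  "exp_loss k f p u = (\<Sum>y\<in>labels k. p y * lovasz_hinge k f u y)"

definition V_set :: "nat \<Rightarrow> (nat \<Rightarrow> real) set" where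
  "V_set k = PiE {1..k} (\<lambda>_. {-1, 0, 1})"

end

(*
  Clipping u to the cube [-1,1]^k does not increase the expected loss, since the Lovasz extension
  of an increasing f is monotone. On the cube L^f(u,y) = F(1 - u * y), and by Edmonds' greedy
  theorem F is linear on every cone of vectors sorted by a common permutation. If some |u_i| takes
  a value tau outside {0,1}, moving all entries of absolute value tau to the adjacent level below
  or above keeps every comparison u_a y_a <= u_b y_b, so the expected loss is affine between the
  two moved vectors, and u lies between them; one of them is therefore at least as good. Each move
  removes a level, so finitely many moves end in {-1,0,1}^k.
*)
theory Submission
  imports Defs
begin

section \<open>Greedy evaluation of the Lovasz extension\<close>

definition lovasz_sum :: "nat \<Rightarrow> (nat set \<Rightarrow> real) \<Rightarrow> (nat \<Rightarrow> nat) \<Rightarrow> (nat \<Rightarrow> real) \<Rightarrow> real" where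
  "lovasz_sum k f \<sigma> x = (\<Sum>i=1..k. x (\<sigma> i) * (f (\<sigma> ` {1..i}) - f (\<sigma> ` {1..<i})))"

definition marginal_gain :: "(nat set \<Rightarrow> real) \<Rightarrow> (nat \<Rightarrow> nat) \<Rightarrow> nat \<Rightarrow> real" where
  "marginal_gain f \<sigma> j = f (\<sigma> ` {1..inv \<sigma> j}) - f (\<sigma> ` {1..<inv \<sigma> j})"

definition base_polytope :: "nat \<Rightarrow> (nat set \<Rightarrow> real) \<Rightarrow> (nat \<Rightarrow> real) set" where
  "base_polytope k f = {g. (\<forall>S\<subseteq>{1..k}. sum g S \<le> f S) \<and> sum g {1..k} = f {1..k}}"

definition decreasing_along :: "nat \<Rightarrow> (nat \<Rightarrow> nat) \<Rightarrow> (nat \<Rightarrow> real) \<Rightarrow> bool" where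
  "decreasing_along k \<sigma> x \<longleftrightarrow> (\<forall>i j. 1 \<le> i \<longrightarrow> i \<le> j \<longrightarrow> j \<le> k \<longrightarrow> x (\<sigma> j) \<le> x (\<sigma> i))"

lemma lovasz_ext_eq_Max_lovasz_sum:
  "lovasz_ext k f x = Max ((\<lambda>\<sigma>. lovasz_sum k f \<sigma> x) ` {\<sigma>. \<sigma> permutes {1..k}})"
  by (simp add: lovasz_ext_def lovasz_sum_def)

lemma lovasz_sum_le_lovasz_ext: "\<sigma> permutes {1..k} \<Longrightarrow> lovasz_sum k f \<sigma> x \<le> lovasz_ext k f x"
  unfolding lovasz_ext_eq_Max_lovasz_sum by (rule Max_ge) (auto simp: finite_permutations)

lemma lovasz_ext_attained: "\<exists>\<sigma>. \<sigma> permutes {1..k} \<and> lovasz_ext k f x = lovasz_sum k f \<sigma> x"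
proof -
  have "lovasz_ext k f x \<in> (\<lambda>\<sigma>. lovasz_sum k f \<sigma> x) ` {\<sigma>. \<sigma> permutes {1..k}}"
    unfolding lovasz_ext_eq_Max_lovasz_sum
    by (rule Max_in) (use permutes_id finite_permutations in blast)+
  then show ?thesis by auto
qed

lemma lovasz_ext_cong:
  assumes "\<And>i. i \<in> {1..k} \<Longrightarrow> x i = x' i"
  shows "lovasz_ext k f x = lovasz_ext k f x'"
proof -
  have "lovasz_sum k f \<sigma> x = lovasz_sum k f \<sigma> x'" if "\<sigma> permutes {1..k}" for \<sigma>
    unfolding lovasz_sum_def using permutes_in_image[OF that] assms by (intro sum.cong) auto
  then show ?thesis
    unfolding lovasz_ext_eq_Max_lovasz_sum by (intro arg_cong[where f=Max] image_cong) auto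
qed

lemma lovasz_sum_eq_sum_marginal_gain:
  assumes "\<sigma> permutes {1..k}"
  shows "lovasz_sum k f \<sigma> x = (\<Sum>j\<in>{1..k}. x j * marginal_gain f \<sigma> j)"
  using sum.reindex_bij_betw[OF permutes_imp_bij[OF assms], of "\<lambda>j. x j * marginal_gain f \<sigma> j"]
  unfolding lovasz_sum_def marginal_gain_def by (simp add: permutes_inverses(2)[OF assms])

lemma sum_prefix_increments:
  fixes \<sigma> :: "nat \<Rightarrow> 'a" and f :: "'a set \<Rightarrow> real"
  shows "(\<Sum>i=1..n. f (\<sigma> ` {1..i}) - f (\<sigma> ` {1..<i})) = f (\<sigma> ` {1..n}) - f {}"
proof (induction n)
  case (Suc n)
  have "{1..<Suc n} = {1..n}" by auto
  with Suc show ?case by (simp add: sum.cl_ivl_Suc)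
qed simp

lemma prefix_image_Suc:
  assumes "inj \<sigma>"
  shows "\<sigma> ` {1..Suc m} = insert (\<sigma> (Suc m)) (\<sigma> ` {1..m})" and "\<sigma> (Suc m) \<notin> \<sigma> ` {1..m}"
  using assms by (auto simp: atLeastAtMostSuc_conv inj_def) (metis Suc_n_not_le_n)

lemma sum_marginal_gain_le:
  assumes sm: "submodular_on k f" and nz: "f {} = 0" and \<sigma>: "\<sigma> permutes {1..k}"
  shows "m \<le> k \<Longrightarrow> S \<subseteq> \<sigma> ` {1..m} \<Longrightarrow> sum (marginal_gain f \<sigma>) S \<le> f S"
proof (induction m arbitrary: S)
  case 0
  then show ?case using nz by simp
next
  case (Suc m)
  note P = prefix_image_Suc[OF permutes_inj[OF \<sigma>], of m]
  show ?case
  proof (cases "\<sigma> (Suc m) \<in> S")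
    case False
    then show ?thesis using Suc P by auto
  next
    case True
    define A where "A = S - {\<sigma> (Suc m)}"
    have A: "A \<subseteq> \<sigma> ` {1..m}" using Suc.prems P A_def by auto
    have S: "S = insert (\<sigma> (Suc m)) A" and "\<sigma> (Suc m) \<notin> A" using True A_def by auto
    moreover have "finite A" using A finite_subset by blast
    ultimately have "sum (marginal_gain f \<sigma>) S = marginal_gain f \<sigma> (\<sigma> (Suc m)) + sum (marginal_gain f \<sigma>) A"
      by simp
    also have "marginal_gain f \<sigma> (\<sigma> (Suc m)) = f (\<sigma> ` {1..Suc m}) - f (\<sigma> ` {1..m})"
      unfolding marginal_gain_def by (simp add: permutes_inverses(2)[OF \<sigma>] atLeastLessThanSuc_atLeastAtMost)
    also have "sum (marginal_gain f \<sigma>) A \<le> f A" using Suc A by simp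
    also have "f (\<sigma> ` {1..Suc m}) - f (\<sigma> ` {1..m}) + f A \<le> f S"
    proof -
      have "\<sigma> ` {1..Suc m} \<subseteq> {1..k}"
        using Suc.prems permutes_image[OF \<sigma>] image_mono[of "{1..Suc m}" "{1..k}" \<sigma>] by simp
      then have "S \<subseteq> {1..k}" "\<sigma> ` {1..m} \<subseteq> {1..k}"
        using Suc.prems(2) P(1) by blast+
      then have "f (S \<union> \<sigma> ` {1..m}) + f (S \<inter> \<sigma> ` {1..m}) \<le> f S + f (\<sigma> ` {1..m})"
        using sm unfolding submodular_on_def by blast
      moreover have "S \<union> \<sigma> ` {1..m} = \<sigma> ` {1..Suc m}" "S \<inter> \<sigma> ` {1..m} = A"
        using S A P by auto
      ultimately show ?thesis by simp
    qed
    finally show ?thesis by simp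
  qed
qed

lemma marginal_gain_in_base_polytope:
  assumes sm: "submodular_on k f" and nz: "f {} = 0" and \<sigma>: "\<sigma> permutes {1..k}"
  shows "marginal_gain f \<sigma> \<in> base_polytope k f"
proof -
  have "sum (marginal_gain f \<sigma>) {1..k} = lovasz_sum k f \<sigma> (\<lambda>_. 1)"
    using lovasz_sum_eq_sum_marginal_gain[OF \<sigma>] by simp
  also have "\<dots> = f {1..k}"
    using sum_prefix_increments[of f \<sigma> k] nz permutes_image[OF \<sigma>] by (simp add: lovasz_sum_def)
  finally show ?thesis
    using sum_marginal_gain_le[OF assms, of k] permutes_image[OF \<sigma>] unfolding base_polytope_def by auto
qed

lemma inner_le_lovasz_sum:
  assumes \<sigma>: "\<sigma> permutes {1..k}" and nz: "f {} = 0"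
    and x: "decreasing_along k \<sigma> x" and g: "g \<in> base_polytope k f"
  shows "(\<Sum>j\<in>{1..k}. x j * g j) \<le> lovasz_sum k f \<sigma> x"
proof -
  define h where "h i = f (\<sigma> ` {1..i}) - f (\<sigma> ` {1..<i})" for i
  define D where "D n = f (\<sigma> ` {1..n}) - sum g (\<sigma> ` {1..n})" for n
  have D_nonneg: "0 \<le> D n" if "n \<le> k" for n
  proof -
    have "\<sigma> ` {1..n} \<subseteq> \<sigma> ` {1..k}" using that by (intro image_mono) auto
    then show ?thesis using g permutes_image[OF \<sigma>] unfolding D_def base_polytope_def by simp
  qed
  have D_Suc: "D (Suc n) = D n + (h (Suc n) - g (\<sigma> (Suc n)))" for n
    using prefix_image_Suc[OF permutes_inj[OF \<sigma>], of n] unfolding D_def h_def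
    by (simp add: atLeastLessThanSuc_atLeastAtMost)
  \<comment> \<open>Abel summation: the defects D n are nonnegative, D k = 0, and x \<circ> \<sigma> is decreasing.\<close>
  have partial: "x (\<sigma> n) * D n \<le> (\<Sum>i=1..n. x (\<sigma> i) * (h i - g (\<sigma> i)))" if "n \<le> k" for n
    using that
  proof (induction n)
    case 0
    then show ?case by (simp add: D_def nz)
  next
    case (Suc n)
    have "x (\<sigma> (Suc n)) * D n \<le> x (\<sigma> n) * D n"
    proof (cases "n = 0")
      case False
      then show ?thesis using x Suc.prems D_nonneg[of n]
        unfolding decreasing_along_def by (intro mult_right_mono) auto
    qed (simp add: D_def nz)
    then have "x (\<sigma> (Suc n)) * D (Suc n) \<le> x (\<sigma> n) * D n + x (\<sigma> (Suc n)) * (h (Suc n) - g (\<sigma> (Suc n)))"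
      using D_Suc[of n] Suc.prems by (simp add: distrib_left)
    also have "\<dots> \<le> (\<Sum>i=1..Suc n. x (\<sigma> i) * (h i - g (\<sigma> i)))"
      using Suc by simp
    finally show ?case .
  qed
  have "D k = 0"
    using g permutes_image[OF \<sigma>] unfolding D_def base_polytope_def by simp
  then have "0 \<le> (\<Sum>i=1..k. x (\<sigma> i) * (h i - g (\<sigma> i)))" using partial[of k] by simp
  also have "\<dots> = lovasz_sum k f \<sigma> x - (\<Sum>i=1..k. x (\<sigma> i) * g (\<sigma> i))"
    unfolding lovasz_sum_def h_def by (simp add: right_diff_distrib sum_subtractf)
  also have "(\<Sum>i=1..k. x (\<sigma> i) * g (\<sigma> i)) = (\<Sum>j\<in>{1..k}. x j * g j)"
    using sum.reindex_bij_betw[OF permutes_imp_bij[OF \<sigma>], of "\<lambda>j. x j * g j"] by simp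
  finally show ?thesis by simp
qed

lemma lovasz_ext_eq_lovasz_sum:
  assumes "submodular_on k f" "f {} = 0" "\<sigma> permutes {1..k}" "decreasing_along k \<sigma> x"
  shows "lovasz_ext k f x = lovasz_sum k f \<sigma> x"
proof -
  obtain \<rho> where \<rho>: "\<rho> permutes {1..k}" "lovasz_ext k f x = lovasz_sum k f \<rho> x"
    using lovasz_ext_attained by blast
  have "lovasz_sum k f \<rho> x = (\<Sum>j\<in>{1..k}. x j * marginal_gain f \<rho> j)"
    by (rule lovasz_sum_eq_sum_marginal_gain[OF \<rho>(1)])
  also have "\<dots> \<le> lovasz_sum k f \<sigma> x"
    using assms marginal_gain_in_base_polytope[OF assms(1,2) \<rho>(1)] by (intro inner_le_lovasz_sum)
  finally show ?thesis using \<rho>(2) lovasz_sum_le_lovasz_ext[OF assms(3), of f x] by linarith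
qed

lemma decreasing_along_permutation_exists:
  fixes x :: "nat \<Rightarrow> real"
  obtains \<sigma> where "\<sigma> permutes {1..k}" "decreasing_along k \<sigma> x"
proof -
  define xs where "xs = sort_key (\<lambda>j. - x j) [1..<Suc k]"
  have xs: "distinct xs" "set xs = {1..k}" "length xs = k" "sorted (map (\<lambda>j. - x j) xs)"
    by (auto simp: xs_def)
  define \<sigma> where "\<sigma> i = (if i \<in> {1..k} then xs ! (i - 1) else i)" for i
  have "bij_betw ((!) xs \<circ> (\<lambda>i. i - 1)) {1..k} {1..k}"
    by (rule bij_betw_trans[OF _ bij_betw_nth[OF xs(1)]])
      (auto simp: xs intro!: bij_betw_byWitness[where f'=Suc])
  then have "bij_betw \<sigma> {1..k} {1..k}"
    by (rule bij_betw_cong[THEN iffD1, rotated]) (simp add: \<sigma>_def)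
  then have "\<sigma> permutes {1..k}" by (rule bij_imp_permutes) (auto simp: \<sigma>_def)
  moreover have "decreasing_along k \<sigma> x"
    unfolding decreasing_along_def \<sigma>_def using sorted_nth_mono[OF xs(4)] xs(3) by auto
  ultimately show ?thesis by (rule that)
qed

lemma lovasz_ext_convex_comb:
  assumes "submodular_on k f" "f {} = 0" "\<sigma> permutes {1..k}"
    and x1: "decreasing_along k \<sigma> x1" and x2: "decreasing_along k \<sigma> x2" and l: "0 \<le> l" "l \<le> 1"
  shows "lovasz_ext k f (\<lambda>i. l * x1 i + (1 - l) * x2 i) = l * lovasz_ext k f x1 + (1 - l) * lovasz_ext k f x2"
proof -
  have "decreasing_along k \<sigma> (\<lambda>i. l * x1 i + (1 - l) * x2 i)"
    using x1 x2 l unfolding decreasing_along_def by (simp add: add_mono mult_left_mono)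
  then show ?thesis
    using lovasz_ext_eq_lovasz_sum[OF assms(1-3)] x1 x2
    by (simp add: lovasz_sum_def sum_distrib_left sum.distrib[symmetric] algebra_simps)
qed

lemma lovasz_ext_mono:
  assumes inc: "increasing_on k f" and le: "\<And>i. i \<in> {1..k} \<Longrightarrow> x i \<le> x' i"
  shows "lovasz_ext k f x \<le> lovasz_ext k f x'"
proof -
  obtain \<sigma> where \<sigma>: "\<sigma> permutes {1..k}" "lovasz_ext k f x = lovasz_sum k f \<sigma> x"
    using lovasz_ext_attained by blast
  have "f (\<sigma> ` {1..<i}) \<le> f (\<sigma> ` {1..i})" if "i \<in> {1..k}" for i
  proof -
    have "{1..i} = insert i {1..<i}" using that by auto
    then have "\<sigma> ` {1..i} = \<sigma> ` {1..<i} \<union> {\<sigma> i}" "\<sigma> ` {1..<i} \<inter> {\<sigma> i} = {}"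
      by (auto simp: inj_image_mem_iff[OF permutes_inj[OF \<sigma>(1)]])
    moreover have "\<sigma> ` {1..<i} \<subseteq> {1..k}" "\<sigma> i \<in> {1..k}"
      using that permutes_image[OF \<sigma>(1)] permutes_in_image[OF \<sigma>(1)] by auto
    ultimately show ?thesis using inc unfolding increasing_on_def by (metis empty_subsetI insert_subset)
  qed
  then have "lovasz_sum k f \<sigma> x \<le> lovasz_sum k f \<sigma> x'"
    unfolding lovasz_sum_def using le permutes_in_image[OF \<sigma>(1)]
    by (intro sum_mono mult_right_mono) auto
  then show ?thesis using \<sigma> lovasz_sum_le_lovasz_ext[OF \<sigma>(1), of f x'] by simp
qed

section \<open>The Lovasz hinge on the unit cube\<close>

definition unit_cube :: "nat \<Rightarrow> (nat \<Rightarrow> real) set" where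
  "unit_cube k = {c. \<forall>i\<in>{1..k}. \<bar>c i\<bar> \<le> 1}"

definition preserves_signed_order :: "nat \<Rightarrow> (nat \<Rightarrow> real) \<Rightarrow> (nat \<Rightarrow> real) \<Rightarrow> bool" where
  "preserves_signed_order k c c' \<longleftrightarrow>
     (\<forall>a\<in>{1..k}. \<forall>b\<in>{1..k}. \<forall>ya\<in>{-1, 1}. \<forall>yb\<in>{-1, 1}.
        c a * ya \<le> c b * yb \<longrightarrow> c' a * ya \<le> c' b * yb)"

lemma labels_sign: "y \<in> labels k \<Longrightarrow> i \<in> {1..k} \<Longrightarrow> y i \<in> {-1, 1}"
  unfolding labels_def by (auto simp: PiE_iff)

lemma lovasz_hinge_on_unit_cube:
  assumes "c \<in> unit_cube k" "y \<in> labels k"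
  shows "lovasz_hinge k f c y = lovasz_ext k f (\<lambda>i. 1 - c i * y i)"
  unfolding lovasz_hinge_def
proof (rule lovasz_ext_cong)
  fix i assume "i \<in> {1..k}"
  then have "\<bar>c i\<bar> \<le> 1" "y i \<in> {-1, 1}"
    using assms(1) labels_sign[OF assms(2)] by (auto simp: unit_cube_def)
  then show "max 0 (1 - c i * y i) = 1 - c i * y i" by (auto simp: abs_le_iff)
qed

lemma convex_comb_in_unit_cube:
  assumes "c1 \<in> unit_cube k" "c2 \<in> unit_cube k" "0 \<le> l" "l \<le> 1"
    and "\<And>i. i \<in> {1..k} \<Longrightarrow> c i = l * c1 i + (1 - l) * c2 i"
  shows "c \<in> unit_cube k"
  unfolding unit_cube_def mem_Collect_eq
proof
  fix i assume i: "i \<in> {1..k}"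
  have "\<bar>c i\<bar> \<le> l * \<bar>c1 i\<bar> + (1 - l) * \<bar>c2 i\<bar>"
    using assms(3,4) assms(5)[OF i] abs_triangle_ineq[of "l * c1 i" "(1 - l) * c2 i"]
    by (simp add: abs_mult)
  also have "\<dots> \<le> 1"
    using assms(1-4) i by (intro convex_bound_le) (auto simp: unit_cube_def)
  finally show "\<bar>c i\<bar> \<le> 1" .
qed

lemma lovasz_hinge_convex_comb:
  assumes sm: "submodular_on k f" and nz: "f {} = 0" and y: "y \<in> labels k"
    and c1: "c1 \<in> unit_cube k" and c2: "c2 \<in> unit_cube k" and l: "0 \<le> l" "l \<le> 1"
    and c: "\<And>i. i \<in> {1..k} \<Longrightarrow> c i = l * c1 i + (1 - l) * c2 i"
    and ord1: "preserves_signed_order k c c1" and ord2: "preserves_signed_order k c c2"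
  shows "lovasz_hinge k f c y = l * lovasz_hinge k f c1 y + (1 - l) * lovasz_hinge k f c2 y"
proof -
  obtain \<sigma> where \<sigma>: "\<sigma> permutes {1..k}" "decreasing_along k \<sigma> (\<lambda>i. 1 - c i * y i)"
    using decreasing_along_permutation_exists by blast
  have along: "decreasing_along k \<sigma> (\<lambda>i. 1 - c' i * y i)" if "preserves_signed_order k c c'" for c'
    unfolding decreasing_along_def
  proof (intro allI impI)
    fix i j assume ij: "1 \<le> i" "i \<le> j" "j \<le> k"
    then have "\<sigma> i \<in> {1..k}" "\<sigma> j \<in> {1..k}" using permutes_in_image[OF \<sigma>(1)] by auto
    moreover have "c (\<sigma> i) * y (\<sigma> i) \<le> c (\<sigma> j) * y (\<sigma> j)"
      using \<sigma>(2) ij unfolding decreasing_along_def by force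
    ultimately have "c' (\<sigma> i) * y (\<sigma> i) \<le> c' (\<sigma> j) * y (\<sigma> j)"
      using that labels_sign[OF y] unfolding preserves_signed_order_def by blast
    then show "1 - c' (\<sigma> j) * y (\<sigma> j) \<le> 1 - c' (\<sigma> i) * y (\<sigma> i)" by simp
  qed
  have "c \<in> unit_cube k" by (rule convex_comb_in_unit_cube[OF c1 c2 l c])
  then have "lovasz_hinge k f c y = lovasz_ext k f (\<lambda>i. 1 - c i * y i)"
    using y by (rule lovasz_hinge_on_unit_cube)
  also have "\<dots> = lovasz_ext k f (\<lambda>i. l * (1 - c1 i * y i) + (1 - l) * (1 - c2 i * y i))"
    by (rule lovasz_ext_cong) (simp add: c algebra_simps)
  also have "\<dots> = l * lovasz_ext k f (\<lambda>i. 1 - c1 i * y i) + (1 - l) * lovasz_ext k f (\<lambda>i. 1 - c2 i * y i)"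
    by (rule lovasz_ext_convex_comb[OF sm nz \<sigma>(1) along[OF ord1] along[OF ord2] l])
  finally show ?thesis
    using lovasz_hinge_on_unit_cube[OF c1 y] lovasz_hinge_on_unit_cube[OF c2 y] by simp
qed

lemma exp_loss_convex_comb:
  assumes sm: "submodular_on k f" and nz: "f {} = 0"
    and c1: "c1 \<in> unit_cube k" and c2: "c2 \<in> unit_cube k" and l: "0 \<le> l" "l \<le> 1"
    and c: "\<And>i. i \<in> {1..k} \<Longrightarrow> c i = l * c1 i + (1 - l) * c2 i"
    and ord1: "preserves_signed_order k c c1" and ord2: "preserves_signed_order k c c2"
  shows "exp_loss k f p c = l * exp_loss k f p c1 + (1 - l) * exp_loss k f p c2"
proof -
  have "p y * lovasz_hinge k f c y
      = l * (p y * lovasz_hinge k f c1 y) + (1 - l) * (p y * lovasz_hinge k f c2 y)"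
    if "y \<in> labels k" for y
  proof -
    have "lovasz_hinge k f c y = l * lovasz_hinge k f c1 y + (1 - l) * lovasz_hinge k f c2 y"
      by (rule lovasz_hinge_convex_comb[OF sm nz that c1 c2 l c ord1 ord2])
    then show ?thesis by (simp only: ring_distribs mult.left_commute)
  qed
  then show ?thesis
    unfolding exp_loss_def sum_distrib_left sum.distrib[symmetric] by (rule sum.cong[OF refl])
qed

lemma exp_loss_cong:
  assumes "\<And>i. i \<in> {1..k} \<Longrightarrow> u i = u' i"
  shows "exp_loss k f p u = exp_loss k f p u'"
  unfolding exp_loss_def lovasz_hinge_def
  by (intro sum.cong refl arg_cong2[where f="(*)"] lovasz_ext_cong) (simp add: assms)

lemma exp_loss_clip_le:
  assumes inc: "increasing_on k f" and p: "p \<in> simplex_labels k"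
  shows "exp_loss k f p (\<lambda>i. max (-1) (min 1 (u i))) \<le> exp_loss k f p u"
  unfolding exp_loss_def
proof (rule sum_mono)
  fix y assume y: "y \<in> labels k"
  have "lovasz_hinge k f (\<lambda>i. max (-1) (min 1 (u i))) y \<le> lovasz_hinge k f u y"
    unfolding lovasz_hinge_def
  proof (rule lovasz_ext_mono[OF inc])
    fix i assume "i \<in> {1..k}"
    then have "y i \<in> {-1, 1}" by (rule labels_sign[OF y])
    then show "max 0 (1 - max (- 1) (min 1 (u i)) * y i) \<le> max 0 (1 - u i * y i)"
      by (auto simp: max_def min_def)
  qed
  moreover have "0 \<le> p y" using p y unfolding simplex_labels_def by auto
  ultimately show "p y * lovasz_hinge k f (\<lambda>i. max (-1) (min 1 (u i))) y \<le> p y * lovasz_hinge k f u y"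
    by (rule mult_left_mono)
qed

section \<open>Merging absolute levels\<close>

definition inner_levels :: "nat \<Rightarrow> (nat \<Rightarrow> real) \<Rightarrow> real set" where
  "inner_levels k c = (\<lambda>i. \<bar>c i\<bar>) ` {1..k} - {0, 1}"

definition move_level :: "real \<Rightarrow> real \<Rightarrow> real \<Rightarrow> real" where
  "move_level \<tau> t s = (if \<bar>s\<bar> = \<tau> then sgn s * t else s)"

lemma move_level_mult_sign: "y \<in> {-1, 1} \<Longrightarrow> move_level \<tau> t s * y = move_level \<tau> t (s * y)"
  by (auto simp: move_level_def sgn_minus)

lemma abs_move_level: "0 < \<tau> \<Longrightarrow> 0 \<le> t \<Longrightarrow> \<bar>move_level \<tau> t s\<bar> = (if \<bar>s\<bar> = \<tau> then t else \<bar>s\<bar>)"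
  by (auto simp: move_level_def abs_mult abs_sgn_eq)

lemma move_level_mono:
  assumes "0 < \<tau>" "0 \<le> t" "s1 \<le> s2"
    and "\<not> (min t \<tau> < \<bar>s1\<bar> \<and> \<bar>s1\<bar> < max t \<tau>)" "\<not> (min t \<tau> < \<bar>s2\<bar> \<and> \<bar>s2\<bar> < max t \<tau>)"
  shows "move_level \<tau> t s1 \<le> move_level \<tau> t s2"
  using assms unfolding move_level_def sgn_if min_def max_def abs_if by (auto split: if_splits)

lemma move_level_preserves_signed_order:
  assumes "0 < \<tau>" "0 \<le> t" and gap: "\<And>i. i \<in> {1..k} \<Longrightarrow> \<not> (min t \<tau> < \<bar>c i\<bar> \<and> \<bar>c i\<bar> < max t \<tau>)"
  shows "preserves_signed_order k c (\<lambda>i. move_level \<tau> t (c i))"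
  unfolding preserves_signed_order_def
proof (intro ballI impI)
  fix a b ya yb
  assume ab: "a \<in> {1..k}" "b \<in> {1..k}" and y: "ya \<in> {-1, 1}" "yb \<in> {-1, 1}"
    and le: "c a * ya \<le> c b * yb"
  have "move_level \<tau> t (c a * ya) \<le> move_level \<tau> t (c b * yb)"
    using y gap[OF ab(1)] gap[OF ab(2)] by (intro move_level_mono[OF assms(1,2) le]) (auto simp: abs_mult)
  then show "move_level \<tau> t (c a) * ya \<le> move_level \<tau> t (c b) * yb"
    by (simp only: move_level_mult_sign[OF y(1)] move_level_mult_sign[OF y(2)])
qed

lemma move_level_in_unit_cube:
  "c \<in> unit_cube k \<Longrightarrow> 0 < \<tau> \<Longrightarrow> 0 \<le> t \<Longrightarrow> t \<le> 1 \<Longrightarrow> (\<lambda>i. move_level \<tau> t (c i)) \<in> unit_cube k"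
  by (auto simp: unit_cube_def abs_move_level)

lemma card_inner_levels_move_level:
  assumes \<tau>: "\<tau> \<in> inner_levels k c" and t: "t \<in> insert 0 (insert 1 ((\<lambda>i. \<bar>c i\<bar>) ` {1..k}))" "t \<noteq> \<tau>"
  shows "card (inner_levels k (\<lambda>i. move_level \<tau> t (c i))) < card (inner_levels k c)"
proof (rule psubset_card_mono)
  show "finite (inner_levels k c)" by (simp add: inner_levels_def)
  have "0 < \<tau>" "0 \<le> t" using \<tau> t by (auto simp: inner_levels_def)
  then have "inner_levels k (\<lambda>i. move_level \<tau> t (c i)) \<subseteq> inner_levels k c - {\<tau>}"
    using t by (auto simp: inner_levels_def abs_move_level)
  then show "inner_levels k (\<lambda>i. move_level \<tau> t (c i)) \<subset> inner_levels k c" using \<tau> by blast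
qed

lemma finite_nearest_below:
  fixes A :: "'a::linorder set"
  assumes "finite A" "a \<in> A" "a < \<tau>"
  obtains lo where "lo \<in> A" "lo < \<tau>" "\<And>v. v \<in> A \<Longrightarrow> v < \<tau> \<Longrightarrow> v \<le> lo"
proof -
  let ?B = "{v \<in> A. v < \<tau>}"
  have "Max ?B \<in> ?B" using assms by (intro Max_in) auto
  moreover have "v \<le> Max ?B" if "v \<in> A" "v < \<tau>" for v using assms that by (intro Max_ge) auto
  ultimately show ?thesis using that by blast
qed

lemma finite_nearest_above:
  fixes A :: "'a::linorder set"
  assumes "finite A" "a \<in> A" "\<tau> < a"
  obtains hi where "hi \<in> A" "\<tau> < hi" "\<And>v. v \<in> A \<Longrightarrow> \<tau> < v \<Longrightarrow> hi \<le> v"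
proof -
  let ?B = "{v \<in> A. \<tau> < v}"
  have "Min ?B \<in> ?B" using assms by (intro Min_in) auto
  moreover have "Min ?B \<le> v" if "v \<in> A" "\<tau> < v" for v using assms that by (intro Min_le) auto
  ultimately show ?thesis using that by blast
qed

lemma min_le_convex_comb:
  fixes a b l :: real
  assumes "0 \<le> l" "l \<le> 1"
  shows "min a b \<le> l * a + (1 - l) * b"
proof -
  have "l * min a b + (1 - l) * min a b \<le> l * a + (1 - l) * b"
    using assms by (intro add_mono mult_left_mono) auto
  then show ?thesis by (simp add: algebra_simps)
qed

lemma exp_loss_move_level_min_le:
  assumes sm: "submodular_on k f" and nz: "f {} = 0" and c: "c \<in> unit_cube k"
    and bounds: "0 \<le> lo" "lo < \<tau>" "\<tau> < hi" "hi \<le> 1"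
    and gap: "\<And>i. i \<in> {1..k} \<Longrightarrow> \<not> (lo < \<bar>c i\<bar> \<and> \<bar>c i\<bar> < \<tau>) \<and> \<not> (\<tau> < \<bar>c i\<bar> \<and> \<bar>c i\<bar> < hi)"
  shows "min (exp_loss k f p (\<lambda>i. move_level \<tau> lo (c i))) (exp_loss k f p (\<lambda>i. move_level \<tau> hi (c i)))
           \<le> exp_loss k f p c"
proof -
  define cl where "cl i = move_level \<tau> lo (c i)" for i
  define ch where "ch i = move_level \<tau> hi (c i)" for i
  define l where "l = (hi - \<tau>) / (hi - lo)"
  have l: "0 \<le> l" "l \<le> 1"
    using bounds unfolding l_def by (auto simp: field_simps)
  have "l * (hi - lo) = hi - \<tau>" using bounds unfolding l_def by simp
  then have \<tau>_eq: "\<tau> = l * lo + (1 - l) * hi" by (simp add: algebra_simps)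
  have comb: "c i = l * cl i + (1 - l) * ch i" if "i \<in> {1..k}" for i
  proof (cases "\<bar>c i\<bar> = \<tau>")
    case True
    then have "c i = sgn (c i) * \<tau>" by (metis abs_mult_sgn mult.commute)
    then show ?thesis using True \<tau>_eq unfolding cl_def ch_def move_level_def by (simp add: algebra_simps)
  qed (simp add: cl_def ch_def move_level_def algebra_simps)
  have ord: "preserves_signed_order k c cl" "preserves_signed_order k c ch"
    unfolding cl_def ch_def using bounds gap by (intro move_level_preserves_signed_order; force)+
  have cube: "cl \<in> unit_cube k" "ch \<in> unit_cube k"
    unfolding cl_def ch_def using c bounds by (intro move_level_in_unit_cube; force)+
  have "exp_loss k f p c = l * exp_loss k f p cl + (1 - l) * exp_loss k f p ch"
    by (rule exp_loss_convex_comb[OF sm nz cube l comb ord])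
  then show ?thesis
    using min_le_convex_comb[OF l] unfolding cl_def ch_def by simp
qed

lemma exp_loss_reduce_inner_levels:
  assumes sm: "submodular_on k f" and nz: "f {} = 0"
    and c: "c \<in> unit_cube k" and \<tau>: "\<tau> \<in> inner_levels k c"
  obtains c' where "c' \<in> unit_cube k" "card (inner_levels k c') < card (inner_levels k c)"
    "exp_loss k f p c' \<le> exp_loss k f p c"
proof -
  define A where "A = insert 0 (insert 1 ((\<lambda>i. \<bar>c i\<bar>) ` {1..k}))"
  have A01: "0 \<le> v \<and> v \<le> 1" if "v \<in> A" for v
    using c that by (auto simp: A_def unit_cube_def)
  have "\<tau> \<in> A" "\<tau> \<noteq> 0" "\<tau> \<noteq> 1" using \<tau> by (auto simp: A_def inner_levels_def)
  then have \<tau>01: "0 < \<tau>" "\<tau> < 1" using A01 by force+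
  obtain lo where lo: "lo \<in> A" "lo < \<tau>" "\<And>v. v \<in> A \<Longrightarrow> v < \<tau> \<Longrightarrow> v \<le> lo"
    using finite_nearest_below[of A 0 \<tau>] \<tau>01 by (auto simp: A_def)
  obtain hi where hi: "hi \<in> A" "\<tau> < hi" "\<And>v. v \<in> A \<Longrightarrow> \<tau> < v \<Longrightarrow> hi \<le> v"
    using finite_nearest_above[of A 1 \<tau>] \<tau>01 by (auto simp: A_def)
  define cl where "cl i = move_level \<tau> lo (c i)" for i
  define ch where "ch i = move_level \<tau> hi (c i)" for i
  have "\<bar>c i\<bar> \<in> A" if "i \<in> {1..k}" for i using that by (simp add: A_def)
  then have "min (exp_loss k f p cl) (exp_loss k f p ch) \<le> exp_loss k f p c"
    unfolding cl_def ch_def using lo hi A01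
    by (intro exp_loss_move_level_min_le[OF sm nz c]) force+
  moreover have "card (inner_levels k cl) < card (inner_levels k c)"
    unfolding cl_def using card_inner_levels_move_level[OF \<tau> lo(1)[unfolded A_def]] lo(2) by simp
  moreover have "card (inner_levels k ch) < card (inner_levels k c)"
    unfolding ch_def using card_inner_levels_move_level[OF \<tau> hi(1)[unfolded A_def]] hi(2) by simp
  moreover have "cl \<in> unit_cube k" "ch \<in> unit_cube k"
    unfolding cl_def ch_def using c \<tau>01 lo hi A01 by (intro move_level_in_unit_cube; force)+
  ultimately show ?thesis
    using that[of cl] that[of ch] by (cases "exp_loss k f p cl \<le> exp_loss k f p ch") auto
qed

lemma restrict_in_V_set:
  assumes "inner_levels k c = {}"
  shows "restrict c {1..k} \<in> V_set k"
proof -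
  have "c i \<in> {-1, 0, 1}" if "i \<in> {1..k}" for i
  proof -
    have "\<bar>c i\<bar> \<in> {0, 1}" using assms that unfolding inner_levels_def by blast
    then show ?thesis by (auto simp: abs_if split: if_splits)
  qed
  then show ?thesis unfolding V_set_def by (auto simp: PiE_iff)
qed

lemma exp_loss_unit_cube_ge_V_set:
  assumes sm: "submodular_on k f" and nz: "f {} = 0"
  shows "c \<in> unit_cube k \<Longrightarrow> \<exists>v\<in>V_set k. exp_loss k f p v \<le> exp_loss k f p c"
proof (induction "card (inner_levels k c)" arbitrary: c rule: less_induct)
  case less
  show ?case
  proof (cases "inner_levels k c = {}")
    case True
    have "exp_loss k f p (restrict c {1..k}) = exp_loss k f p c" by (rule exp_loss_cong) simp
    with restrict_in_V_set[OF True] show ?thesis by (metis order_refl)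
  next
    case False
    then obtain \<tau> where "\<tau> \<in> inner_levels k c" by blast
    then obtain c' where c': "c' \<in> unit_cube k" "card (inner_levels k c') < card (inner_levels k c)"
      "exp_loss k f p c' \<le> exp_loss k f p c"
      using exp_loss_reduce_inner_levels[OF sm nz less.prems] by blast
    then obtain v where "v \<in> V_set k" "exp_loss k f p v \<le> exp_loss k f p c'"
      using less.hyps by blast
    with c'(3) show ?thesis by (meson order_trans)
  qed
qed

theorem proposition1:
  fixes k :: nat and f :: "nat set \<Rightarrow> real"
  assumes "f \<in> F_class k"
  shows "\<forall>p\<in>simplex_labels k. \<exists>v\<in>V_set k.
           (\<forall>u::nat \<Rightarrow> real. exp_loss k f p v \<le> exp_loss k f p u)"
proof
  fix p assume p: "p \<in> simplex_labels k"
  have sm: "submodular_on k f" and inc: "increasing_on k f" and nz: "f {} = 0"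
    using assms unfolding F_class_def normalized_def by auto
  have "finite (V_set k)" "V_set k \<noteq> {}"
    unfolding V_set_def by (auto intro: finite_PiE simp: PiE_eq_empty_iff)
  then obtain v where v: "v \<in> V_set k" "\<And>w. w \<in> V_set k \<Longrightarrow> exp_loss k f p v \<le> exp_loss k f p w"
    using ex_is_arg_min_if_finite[of "V_set k" "exp_loss k f p"] by (auto simp: is_arg_min_linorder)
  have "exp_loss k f p v \<le> exp_loss k f p u" for u
  proof -
    define c where "c i = max (-1) (min 1 (u i))" for i
    have "c \<in> unit_cube k" by (auto simp: c_def unit_cube_def)
    then obtain w where "w \<in> V_set k" "exp_loss k f p w \<le> exp_loss k f p c"
      using exp_loss_unit_cube_ge_V_set[OF sm nz] by blast
    moreover have "exp_loss k f p c \<le> exp_loss k f p u"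
      unfolding c_def by (rule exp_loss_clip_le[OF inc p])
    ultimately show ?thesis using v(2) by force
  qed
  with v(1) show "\<exists>v\<in>V_set k. \<forall>u. exp_loss k f p v \<le> exp_loss k f p u" by blast
qed

end
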